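(* Let $0<w_1<\dots<w_n$ be integers with $\sum_{i=1}^n w_i<2^n-1$, and let $\Delta$ satisfy $2^{n/2}\le\Delta\le d<2^n$. Then there exists $j\in\{0,1,\dots,n-1\}$ such that $\#\{t: f_t>2^j\}>\frac{\Delta}{2^{j+1}n}$.
   Context: Let $w(S)=\sum_{i\in S}w_i$. The frequency is $f_t=\#\{S\subseteq\{1,\dots,n\}:w(S)=t\}$ for integers $t\ge0$. The parameter is $d=\sum_{0\le t<2^n}\max\{0,f_t-1\}$. *)

theory Defs
  imports Complex_Main
begin

definition freq :: "(nat \<Rightarrow> nat) \<Rightarrow> nat \<Rightarrow> nat \<Rightarrow> nat" where
  "freq w n t = card {S. S \<subseteq> {1..n} \<and> (\<Sum>i\<in>S. w i) = t}"

text \<open>d = sum over 0 <= t < 2^n of max 0 (f_t - 1); nat subtraction truncates at 0.\<close>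
definition dpar :: "(nat \<Rightarrow> nat) \<Rightarrow> nat \<Rightarrow> nat" where
  "dpar w n = (\<Sum>t<2^n. freq w n t - 1)"

end

theory Submission
  imports Defs
begin

text \<open>Every frequency is at most \<open>2^n\<close>, so the binary layer-cake bound
  \<open>f - 1 \<le> \<Sum>{2^j | j < n, 2^j < f}\<close> gives \<open>d \<le> \<Sum>{2^j N_j | j < n}\<close> with
  \<open>N_j = #{t | f_t > 2^j}\<close>. If \<open>N_j \<le> \<Delta>/(2^(j+1) n)\<close> held for every \<open>j < n\<close>, each of
  the \<open>n\<close> summands would be at most \<open>\<Delta>/(2n)\<close>, so \<open>d \<le> \<Delta>/2 < \<Delta>\<close>, contradicting
  \<open>\<Delta> \<le> d\<close>.\<close>

lemma diff_one_le_sum_powers_below: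
  fixes f :: nat
  assumes "f \<le> 2 ^ n"
  shows "f - 1 \<le> (\<Sum>j<n. if 2 ^ j < f then 2 ^ j else 0)"
  using assms
proof (induction n)
  case (Suc n)
  show ?case
  proof (cases "f \<le> 2 ^ n")
    case True
    with Suc.IH show ?thesis by simp
  next
    case False
    have "(\<Sum>j<n. if 2 ^ j < f then 2 ^ j else 0) = (\<Sum>j<n. (2::nat) ^ j)"
    proof (intro sum.cong refl)
      fix j assume "j \<in> {..<n}"
      then have "(2::nat) ^ j < 2 ^ n" by (simp add: power_strict_increasing)
      then have "2 ^ j < f" using False by linarith
      then show "(if 2 ^ j < f then 2 ^ j else 0) = (2::nat) ^ j" by simp
    qed
    also have "\<dots> = 2 ^ n - 1"
      using mask_eq_sum_exp_nat[of n] by (simp add: lessThan_def)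
    finally show ?thesis using False Suc.prems by simp
  qed
qed simp

lemma freq_le_pow: "freq w n t \<le> 2 ^ n"
proof -
  have "freq w n t \<le> card (Pow {1..n})"
    unfolding freq_def by (intro card_mono) auto
  then show ?thesis by (simp add: card_Pow)
qed

lemma finite_freq_gt: "finite {t. k < freq w n t}"
proof (rule finite_subset)
  show "{t. k < freq w n t} \<subseteq> (\<lambda>S. \<Sum>i\<in>S. w i) ` Pow {1..n}"
  proof
    fix t assume "t \<in> {t. k < freq w n t}"
    then have "freq w n t \<noteq> 0" by simp
    then have "{S. S \<subseteq> {1..n} \<and> (\<Sum>i\<in>S. w i) = t} \<noteq> {}"
      unfolding freq_def by (metis card.empty)
    then show "t \<in> (\<lambda>S. \<Sum>i\<in>S. w i) ` Pow {1..n}" by blast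
  qed
qed simp

lemma dpar_le_sum_card_freq_gt:
  "dpar w n \<le> (\<Sum>j<n. 2 ^ j * card {t. 2 ^ j < freq w n t})"
proof -
  have "dpar w n \<le> (\<Sum>t<2 ^ n. \<Sum>j<n. if 2 ^ j < freq w n t then 2 ^ j else 0)"
    unfolding dpar_def by (intro sum_mono diff_one_le_sum_powers_below freq_le_pow)
  also have "\<dots> = (\<Sum>j<n. \<Sum>t<2 ^ n. if 2 ^ j < freq w n t then 2 ^ j else 0)"
    by (rule sum.swap)
  also have "\<dots> = (\<Sum>j<n. 2 ^ j * card {t \<in> {..<2 ^ n}. 2 ^ j < freq w n t})"
    by (intro sum.cong refl) (simp add: sum.If_cases Int_def)
  also have "\<dots> \<le> (\<Sum>j<n. 2 ^ j * card {t. 2 ^ j < freq w n t})"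
    by (intro sum_mono mult_le_mono2 card_mono finite_freq_gt) auto
  finally show ?thesis .
qed

theorem lemma3p5:
  fixes w :: "nat \<Rightarrow> nat" and n :: nat and \<Delta> :: real
  assumes pos: "\<And>i. 1 \<le> i \<Longrightarrow> i \<le> n \<Longrightarrow> 0 < w i"
    and incr: "\<And>i j. 1 \<le> i \<Longrightarrow> i < j \<Longrightarrow> j \<le> n \<Longrightarrow> w i < w j"
    and sumw: "(\<Sum>i=1..n. w i) < 2^n - 1"
    and D1: "2 powr (real n / 2) \<le> \<Delta>"
    and D2: "\<Delta> \<le> real (dpar w n)"
    and D3: "dpar w n < 2^n"
  shows "\<exists>j<n. real (card {t. freq w n t > 2^j}) > \<Delta> / (2^(j+1) * real n)"
proof (rule ccontr)
  assume "\<not> ?thesis"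
  then have small: "real (card {t. 2 ^ j < freq w n t}) \<le> \<Delta> / (2 ^ (j + 1) * real n)"
    if "j < n" for j
    using that by (meson not_less)
  have "n > 0" using sumw by (cases n) auto
  have "\<Delta> > 0" using D1 by (smt (verit) powr_gt_zero)
  have "real (dpar w n) \<le> (\<Sum>j<n. 2 ^ j * real (card {t. 2 ^ j < freq w n t}))"
    using dpar_le_sum_card_freq_gt[of w n, folded of_nat_le_iff[where 'a=real]] by simp
  also have "\<dots> \<le> (\<Sum>j<n. \<Delta> / (2 * real n))"
  proof (intro sum_mono)
    fix j assume "j \<in> {..<n}"
    then have "2 ^ j * real (card {t. 2 ^ j < freq w n t}) \<le> 2 ^ j * (\<Delta> / (2 ^ (j + 1) * real n))"
      using small by (intro mult_left_mono) auto
    then show "2 ^ j * real (card {t. 2 ^ j < freq w n t}) \<le> \<Delta> / (2 * real n)"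
      by (simp add: field_simps)
  qed
  also have "\<dots> = \<Delta> / 2" using \<open>n > 0\<close> by simp
  finally show False using D2 \<open>\<Delta> > 0\<close> by linarith
qed

end
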